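(* Fix $n\ge1$ and a real number $\kappa>0$. Let $\ell_1,\dots,\ell_m\in\{1,\dots,n\}$ ($m\ge 0$) and put $U=A^{(\ell_1)}\odot\cdots\odot A^{(\ell_m)}$ (with $U=E$ if $m=0$), $U=(u_{i,j})$. Then for all $1\le i\le j\le n$, $$u_{i,j}=\kappa\cdot N_{i,j},$$ where $N_{i,j}$ is the maximal length of a nondecreasing subsequence of $[\ell_1,\dots,\ell_m]$ all of whose terms lie in $\{i,i+1,\dots,j\}$ (with $N_{i,j}=0$ if there is none); and $u_{i,j}=-\infty$ for $i>j$.
   Context: Tropical (max-plus) semiring: $\mathbb T=\mathbb R\cup\{-\infty\}$ with $a\oplus b=\max(a,b)$, $a\odot b=a+b$; tropical matrix product $(A\odot B)_{i,j}=\max_t(a_{i,t}+b_{t,j})$, tropical matrix sum is entrywise max. For $\ell\in\{1,\dots,n\}$, $A^{(\ell)}$ is the $n\times n$ tropical matrix with $A^{(\ell)}_{i,j}=\kappa$ if $i\le\ell\le j$, $A^{(\ell)}_{i,j}=0$ if $i\le j$ but not $i\le \ell\le j$, and $A^{(\ell)}_{i,j}=-\infty$ if $i>j$. $E$ is the $n\times n$ matrix with $E_{i,j}=0$ for $i\le j$ and $-\infty$ for $i>j$. Subsequences are taken by positions. *)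

theory Defs
  imports "HOL-Library.Extended_Real"
begin

text \<open>Tropical (max-plus) values are modelled in ereal; only finite values and
  -infinity occur. n x n matrices are functions nat => nat => ereal, indices 1..n.\<close>

type_synonym tmat = "nat \<Rightarrow> nat \<Rightarrow> ereal"

definition trop_mult :: "nat \<Rightarrow> tmat \<Rightarrow> tmat \<Rightarrow> tmat" where
  "trop_mult n A B = (\<lambda>i j. Max ((\<lambda>t. A i t + B t j) ` {1..n}))"

definition Amat :: "real \<Rightarrow> nat \<Rightarrow> tmat" where
  "Amat \<kappa> l = (\<lambda>i j. if i \<le> j then (if i \<le> l \<and> l \<le> j then ereal \<kappa> else 0) else -\<infinity>)"

definition Emat :: tmat where
  "Emat = (\<lambda>i j. if i \<le> j then 0 else -\<infinity>)"

fun trop_prod :: "nat \<Rightarrow> real \<Rightarrow> nat list \<Rightarrow> tmat" where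
  "trop_prod n \<kappa> [] = Emat"
| "trop_prod n \<kappa> [l] = Amat \<kappa> l"
| "trop_prod n \<kappa> (l # l' # ls) = trop_mult n (Amat \<kappa> l) (trop_prod n \<kappa> (l' # ls))"

definition Nlen :: "nat list \<Rightarrow> nat \<Rightarrow> nat \<Rightarrow> nat" where
  "Nlen ls i j = Max {length s | s. s \<in> set (subseqs ls) \<and> sorted s \<and> (\<forall>x\<in>set s. i \<le> x \<and> x \<le> j)}"

end

theory Submission
  imports Defs
begin

text \<open>For \<open>i \<le> j\<close> the max-plus product \<open>A\<^sup>(\<^sup>l\<^sup>) \<odot> V\<close> has entry
  \<open>max\<^sub>t (a\<^sub>i\<^sub>t + v\<^sub>t\<^sub>j)\<close>, where only \<open>t \<in> {i..j}\<close> contribute and the term is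
  \<open>\<kappa> [i \<le> l \<le> t] + v\<^sub>t\<^sub>j\<close>. A longest nondecreasing subsequence of \<open>l # ls\<close> in \<open>{i..j}\<close> either
  skips \<open>l\<close> (the term \<open>t = i\<close>) or starts with \<open>l\<close> and continues in \<open>{l..j}\<close> (the term \<open>t = l\<close>);
  since \<open>N\<^sub>t\<^sub>j\<close> decreases in \<open>t\<close>, no other split point does better.\<close>

lemma Nlen_bounded:
  assumes "s \<in> set (subseqs ls)" "sorted s" "\<forall>x\<in>set s. i \<le> x \<and> x \<le> j"
  shows "length s \<le> Nlen ls i j"
  unfolding Nlen_def
  by (rule Max_ge) (use assms in \<open>auto intro: finite_subset[of _ "length ` set (subseqs ls)"]\<close>)

lemma Nlen_attained:
  obtains s where "s \<in> set (subseqs ls)" "sorted s" "\<forall>x\<in>set s. i \<le> x \<and> x \<le> j"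
    "length s = Nlen ls i j"
proof -
  let ?L = "{length s | s. s \<in> set (subseqs ls) \<and> sorted s \<and> (\<forall>x\<in>set s. i \<le> x \<and> x \<le> j)}"
  have "[] \<in> set (subseqs ls)"
    by (induction ls) (auto simp: Let_def)
  then have "?L \<noteq> {}"
    by force
  moreover have "finite ?L"
    by (rule finite_subset[of _ "length ` set (subseqs ls)"]) auto
  ultimately have "Max ?L \<in> ?L"
    by (rule Max_in[rotated])
  then obtain s where "s \<in> set (subseqs ls)" "sorted s" "\<forall>x\<in>set s. i \<le> x \<and> x \<le> j"
    "length s = Max ?L"
    by auto
  then show ?thesis
    using that unfolding Nlen_def by simp
qed

lemma Nlen_Nil [simp]: "Nlen [] i j = 0"
  unfolding Nlen_def by simp

lemma Nlen_antimono:
  assumes "i \<le> i'"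
  shows "Nlen ls i' j \<le> Nlen ls i j"
proof -
  obtain s where "s \<in> set (subseqs ls)" "sorted s" "\<forall>x\<in>set s. i' \<le> x \<and> x \<le> j"
    "length s = Nlen ls i' j"
    using Nlen_attained by blast
  moreover from this(3) have "\<forall>x\<in>set s. i \<le> x \<and> x \<le> j"
    using assms by auto
  ultimately show ?thesis
    using Nlen_bounded by metis
qed

lemma Nlen_Cons:
  "Nlen (l # ls) i j = max (Nlen ls i j) (if i \<le> l \<and> l \<le> j then Suc (Nlen ls l j) else 0)"
proof (rule antisym)
  obtain s where s: "s \<in> set (subseqs (l # ls))" "sorted s" "\<forall>x\<in>set s. i \<le> x \<and> x \<le> j"
    and len: "length s = Nlen (l # ls) i j"
    using Nlen_attained by blast
  show "Nlen (l # ls) i j \<le> max (Nlen ls i j) (if i \<le> l \<and> l \<le> j then Suc (Nlen ls l j) else 0)"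
  proof (cases "s \<in> set (subseqs ls)")
    case True
    then show ?thesis
      using Nlen_bounded[of s ls i j] s len by auto
  next
    case False
    then obtain s' where s': "s = l # s'" "s' \<in> set (subseqs ls)"
      using s(1) by (auto simp: Let_def)
    then have "length s' \<le> Nlen ls l j"
      using s by (intro Nlen_bounded) auto
    then show ?thesis
      using s s' len by auto
  qed
next
  have "Nlen ls i j \<le> Nlen (l # ls) i j"
  proof -
    obtain s where "s \<in> set (subseqs ls)" "sorted s" "\<forall>x\<in>set s. i \<le> x \<and> x \<le> j"
      "length s = Nlen ls i j"
      using Nlen_attained by blast
    then show ?thesis
      using Nlen_bounded[of s "l # ls" i j] by (auto simp: Let_def)
  qed
  moreover have "Suc (Nlen ls l j) \<le> Nlen (l # ls) i j" if "i \<le> l" "l \<le> j"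
  proof -
    obtain s where "s \<in> set (subseqs ls)" "sorted s" "\<forall>x\<in>set s. l \<le> x \<and> x \<le> j"
      "length s = Nlen ls l j"
      using Nlen_attained by blast
    moreover from this(3) have "\<forall>x\<in>set (l # s). i \<le> x \<and> x \<le> j"
      using that by auto
    ultimately show ?thesis
      using Nlen_bounded[of "l # s" "l # ls" i j] by (auto simp: Let_def)
  qed
  ultimately show "max (Nlen ls i j) (if i \<le> l \<and> l \<le> j then Suc (Nlen ls l j) else 0)
      \<le> Nlen (l # ls) i j"
    by auto
qed

lemma Nlen_Cons_Max:
  assumes "i \<le> j"
  shows "Nlen (l # ls) i j = Max ((\<lambda>t. of_bool (i \<le> l \<and> l \<le> t) + Nlen ls t j) ` {i..j})"
proof (rule sym, rule Max_eqI, safe)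
  show "of_bool (i \<le> l \<and> l \<le> t) + Nlen ls t j \<le> Nlen (l # ls) i j" if "t \<in> {i..j}" for t
  proof (cases "i \<le> l \<and> l \<le> t")
    case True
    then show ?thesis
      using that Nlen_antimono[of l t ls j] by (auto simp: Nlen_Cons)
  next
    case False
    then show ?thesis
      using that Nlen_antimono[of i t ls j] by (auto simp: Nlen_Cons)
  qed
  show "Nlen (l # ls) i j \<in> (\<lambda>t. of_bool (i \<le> l \<and> l \<le> t) + Nlen ls t j) ` {i..j}"
  proof (cases "i \<le> l \<and> l \<le> j \<and> Nlen ls i j \<le> Suc (Nlen ls l j)")
    case True
    then show ?thesis
      by (intro image_eqI[of _ _ l]) (auto simp: Nlen_Cons)
  next
    case False
    then show ?thesis
      using assms by (intro image_eqI[of _ _ i]) (auto simp: Nlen_Cons)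
  qed
qed simp

definition lnds_mat :: "real \<Rightarrow> nat list \<Rightarrow> tmat" where
  "lnds_mat \<kappa> ls = (\<lambda>i j. if i \<le> j then ereal (\<kappa> * real (Nlen ls i j)) else -\<infinity>)"

lemma lnds_mat_Nil: "lnds_mat \<kappa> [] = Emat"
  by (simp add: lnds_mat_def Emat_def fun_eq_iff)

lemma lnds_mat_single: "lnds_mat \<kappa> [l] = Amat \<kappa> l"
  by (simp add: lnds_mat_def Amat_def Nlen_Cons fun_eq_iff)

lemma Max_ereal_image_minf_outside:
  fixes f :: "'a \<Rightarrow> ereal"
  assumes "finite A" "A \<noteq> {}" "S \<subseteq> A"
  shows "Max ((\<lambda>t. if t \<in> S then f t else -\<infinity>) ` A) = (if S = {} then -\<infinity> else Max (f ` S))"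
proof (cases "S = {}")
  case True
  then show ?thesis
    using assms(2) by (simp add: image_constant_conv)
next
  case False
  have "finite S"
    using assms finite_subset by blast
  have "Max ((\<lambda>t. if t \<in> S then f t else -\<infinity>) ` A) = Max (f ` S)"
  proof (rule Max_eqI)
    show "Max (f ` S) \<in> (\<lambda>t. if t \<in> S then f t else -\<infinity>) ` A"
      using Max_in[of "f ` S"] \<open>finite S\<close> False assms(3) by fastforce
  qed (use assms \<open>finite S\<close> in auto)
  with False show ?thesis
    by simp
qed

lemma trop_mult_cong:
  assumes "\<And>t. 1 \<le> t \<Longrightarrow> t \<le> n \<Longrightarrow> B t j = B' t j"
  shows "trop_mult n A B i j = trop_mult n A B' i j"
  unfolding trop_mult_def using assms by (intro arg_cong[where f = Max] image_cong) auto

lemma trop_mult_Amat_lnds_mat: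
  assumes "0 \<le> \<kappa>" "1 \<le> i" "i \<le> n" "1 \<le> j" "j \<le> n"
  shows "trop_mult n (Amat \<kappa> l) (lnds_mat \<kappa> ls) i j = lnds_mat \<kappa> (l # ls) i j"
proof -
  define g where "g t = of_bool (i \<le> l \<and> l \<le> t) + Nlen ls t j" for t
  define h where "h m = ereal (\<kappa> * real m)" for m
  have term_eq: "Amat \<kappa> l i t + lnds_mat \<kappa> ls t j = (if t \<in> {i..j} then h (g t) else -\<infinity>)" for t
    by (auto simp: Amat_def lnds_mat_def g_def h_def algebra_simps)
  have "trop_mult n (Amat \<kappa> l) (lnds_mat \<kappa> ls) i j
      = (if {i..j} = {} then -\<infinity> else Max ((h \<circ> g) ` {i..j}))"
    unfolding trop_mult_def term_eq
    using assms by (subst Max_ereal_image_minf_outside) (auto simp: comp_def)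
  also have "\<dots> = lnds_mat \<kappa> (l # ls) i j"
  proof (cases "i \<le> j")
    case True
    have "mono h"
      using \<open>0 \<le> \<kappa>\<close> by (auto intro!: monoI mult_left_mono simp: h_def)
    then have "Max ((h \<circ> g) ` {i..j}) = h (Max (g ` {i..j}))"
      using mono_Max_commute[OF \<open>mono h\<close>, of "g ` {i..j}"] True by (simp add: image_comp)
    then show ?thesis
      using True by (simp add: lnds_mat_def h_def g_def Nlen_Cons_Max)
  qed (simp add: lnds_mat_def)
  finally show ?thesis .
qed

text \<open>The range hypothesis on the factors is not needed: indices outside \<open>{1..n}\<close> simply
  give factors \<open>A\<^sup>(\<^sup>l\<^sup>)\<close> that never contribute \<open>\<kappa>\<close>, matching subsequences that never use them.\<close>

lemma trop_prod_eq_lnds_mat: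
  assumes "0 \<le> \<kappa>" "1 \<le> i" "i \<le> n" "1 \<le> j" "j \<le> n"
  shows "trop_prod n \<kappa> ls i j = lnds_mat \<kappa> ls i j"
  using assms
proof (induction n \<kappa> ls arbitrary: i rule: trop_prod.induct)
  case (3 n \<kappa> l l' ls)
  have "trop_prod n \<kappa> (l # l' # ls) i j = trop_mult n (Amat \<kappa> l) (lnds_mat \<kappa> (l' # ls)) i j"
    using "3.IH" "3.prems" by (auto intro: trop_mult_cong)
  also have "\<dots> = lnds_mat \<kappa> (l # l' # ls) i j"
    using "3.prems" by (intro trop_mult_Amat_lnds_mat)
  finally show ?case .
qed (simp_all add: lnds_mat_Nil lnds_mat_single)

theorem mainTheorem5:
  fixes n :: nat and \<kappa> :: real and ls :: "nat list"
  assumes "n \<ge> 1" and "\<kappa> > 0" and "\<forall>l\<in>set ls. 1 \<le> l \<and> l \<le> n"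
  shows "(\<forall>i j. 1 \<le> i \<and> i \<le> j \<and> j \<le> n \<longrightarrow>
            trop_prod n \<kappa> ls i j = ereal (\<kappa> * real (Nlen ls i j)))
       \<and> (\<forall>i j. 1 \<le> j \<and> j < i \<and> i \<le> n \<longrightarrow> trop_prod n \<kappa> ls i j = -\<infinity>)"
  using trop_prod_eq_lnds_mat[of \<kappa>] \<open>\<kappa> > 0\<close> by (auto simp: lnds_mat_def)

end
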